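(* Let $M$ be a proper metric space and $A_0,\dots,A_n$ a coarsely transverse $n$-partition of $M$. Then there exists a coarse map $f:M\to\mathrm{C}^n$ such that $f^{-1}(A_i^{\mathrm{std}})=A_i$ for $i=0,\dots,n$.
   Context: For $Y\subseteq M$, $Y_R=\{x:d(x,Y)\le R\}$. A coarsely transverse $n$-partition is a collection of pairwise disjoint Borel sets $A_0,\dots,A_n$ with union $M$ such that $(A_0)_R\cap\dots\cap(A_n)_R$ is bounded for all $R\ge0$. $\mathrm{C}^n$ is the boundary of $\mathbb{R}^{n+1}_{\ge0}=\{x\in\mathbb{R}^{n+1}: x_a\ge0\ \forall a\}$, i.e. the set of $x\in\mathbb{R}^{n+1}_{\ge0}$ with $x_a=0$ for some $a$, with the max metric. Its standard partition is $A_i^{\mathrm{std}}=\{x\in\mathrm{C}^n: x_0,\dots,x_{i-1}>0,\ x_i=0\}$. A coarse map is a Borel map that is controlled (for each $r>0$ there is $R>0$ with $d(x,y)\le r\Rightarrow d(f(x),f(y))\le R$) and proper (preimages of bounded sets are bounded). *)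

theory Defs
  imports "HOL-Analysis.Analysis"
begin

definition proper_metric_space :: "'a::metric_space itself \<Rightarrow> bool" where
  "proper_metric_space _ \<longleftrightarrow> (\<forall>(x::'a) r. compact (cball x r))"

text \<open>Closed R-neighbourhood Y_R = {x. d(x,Y) \<le> R}, with d(x,{}) = infinity (so {}_R = {}).\<close>
definition nbhd :: "'a::metric_space set \<Rightarrow> real \<Rightarrow> 'a set" where
  "nbhd Y R = {x. Y \<noteq> {} \<and> infdist x Y \<le> R}"

text \<open>Coarsely transverse partition indexed by a finite linearly ordered type 'i
  (standing for {0,...,n}).\<close>
definition coarsely_transverse_partition :: "('i::{finite,linorder} \<Rightarrow> 'a::metric_space set) \<Rightarrow> bool" where
  "coarsely_transverse_partition A \<longleftrightarrow>
     (\<forall>i. A i \<in> sets borel) \<and>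
     (\<forall>i j. i \<noteq> j \<longrightarrow> A i \<inter> A j = {}) \<and>
     (\<Union>i. A i) = UNIV \<and>
     (\<forall>R\<ge>0. bounded (\<Inter>i. nbhd (A i) R))"

definition dmax :: "real^'i::finite \<Rightarrow> real^'i \<Rightarrow> real" where
  "dmax x y = Max (range (\<lambda>a. \<bar>x $ a - y $ a\<bar>))"

definition Ccone :: "(real^'i::finite) set" where
  "Ccone = {x. (\<forall>a. 0 \<le> x $ a) \<and> (\<exists>a. x $ a = 0)}"

definition Astd :: "'i::{finite,linorder} \<Rightarrow> (real^'i::{finite,linorder}) set" where
  "Astd i = {x \<in> Ccone. (\<forall>j<i. 0 < x $ j) \<and> x $ i = 0}"

definition coarse_map_to_C :: "('a::metric_space \<Rightarrow> real^'i::finite) \<Rightarrow> bool" where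
  "coarse_map_to_C f \<longleftrightarrow>
     (\<forall>x. f x \<in> Ccone) \<and>
     f \<in> borel_measurable borel \<and>
     (\<forall>r>0. \<exists>R>0. \<forall>x y. dist x y \<le> r \<longrightarrow> dmax (f x) (f y) \<le> R) \<and>
     (\<forall>B. B \<subseteq> Ccone \<longrightarrow> (\<exists>c R. \<forall>y\<in>B. dmax c y \<le> R) \<longrightarrow> bounded (f -` B))"

end

theory Submission
  imports Defs
begin

text \<open>Send \<open>x\<close> to the vector whose \<open>i\<close>-th coordinate is \<open>d(x, A\<^sub>i)\<close>, increased by \<open>1\<close> when
  \<open>x \<notin> A\<^sub>i\<close>. A coordinate vanishes exactly on its own piece and is at least \<open>1\<close> elsewhere, so
  the preimage of \<open>A\<^sub>i\<^sup>std\<close> is \<open>A\<^sub>i\<close>. Each coordinate is \<open>1\<close>-Lipschitz up to the jump of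
  height \<open>1\<close>, so the map is controlled. A bounded subset of \<open>C\<^sup>n\<close> has all coordinates
  bounded by some \<open>K\<close>, so its preimage lies in the intersection of the \<open>K\<close>-neighbourhoods
  of the \<open>A\<^sub>i\<close>, which is bounded by transversality.\<close>

lemma dmax_le_iff: "dmax x y \<le> R \<longleftrightarrow> (\<forall>a. \<bar>(x::real^'i::finite) $ a - y $ a\<bar> \<le> R)"
  unfolding dmax_def by (subst Max_le_iff) auto

lemma borel_measurable_vec_lambda:
  fixes g :: "'i::finite \<Rightarrow> 'a \<Rightarrow> real"
  assumes "\<And>a. g a \<in> borel_measurable M"
  shows "(\<lambda>x. \<chi> a. g a x) \<in> borel_measurable M"
proof (rule borel_measurable_euclidean_space[THEN iffD2], intro ballI)
  fix b :: "real^'i"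
  assume "b \<in> Basis"
  then obtain a where "b = axis a 1"
    by (auto simp: Basis_vec_def)
  then have "(\<lambda>x. (\<chi> a. g a x) \<bullet> b) = g a"
    by (simp add: cart_eq_inner_axis[symmetric] fun_eq_iff)
  then show "(\<lambda>x. (\<chi> a. g a x) \<bullet> b) \<in> borel_measurable M"
    using assms by simp
qed

text \<open>For \<open>Y = {}\<close> the distance to \<open>Y\<close> would be the junk value \<open>infdist x {} = 0\<close>; the
  distance to a base point \<open>x\<^sub>0\<close> is used instead, which keeps the coordinate proper.\<close>
definition marked_infdist :: "'a::metric_space \<Rightarrow> 'a set \<Rightarrow> 'a \<Rightarrow> real" where
  "marked_infdist x\<^sub>0 Y x = (if Y = {} then dist x x\<^sub>0 else infdist x Y) + (if x \<in> Y then 0 else 1)"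

lemma marked_infdist_nonneg: "0 \<le> marked_infdist x\<^sub>0 Y x"
  by (simp add: marked_infdist_def infdist_nonneg)

lemma one_le_marked_infdist: "x \<notin> Y \<Longrightarrow> 1 \<le> marked_infdist x\<^sub>0 Y x"
  by (simp add: marked_infdist_def infdist_nonneg)

lemma marked_infdist_eq_0_iff: "marked_infdist x\<^sub>0 Y x = 0 \<longleftrightarrow> x \<in> Y"
  using one_le_marked_infdist[of x Y x\<^sub>0] by (cases "x \<in> Y") (auto simp: marked_infdist_def)

lemma infdist_le_marked_infdist: "Y \<noteq> {} \<Longrightarrow> infdist x Y \<le> marked_infdist x\<^sub>0 Y x"
  by (simp add: marked_infdist_def)

lemma dist_le_marked_infdist: "Y = {} \<Longrightarrow> dist x x\<^sub>0 \<le> marked_infdist x\<^sub>0 Y x"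
  by (simp add: marked_infdist_def)

lemma abs_marked_infdist_diff_le:
  "\<bar>marked_infdist x\<^sub>0 Y x - marked_infdist x\<^sub>0 Y y\<bar> \<le> dist x y + 1"
proof -
  have "\<bar>(if Y = {} then dist x x\<^sub>0 else infdist x Y) - (if Y = {} then dist y x\<^sub>0 else infdist y Y)\<bar>
      \<le> dist x y"
    using abs_dist_diff_le[of x x\<^sub>0 y] infdist_triangle_abs[of x Y y]
    by (simp add: dist_commute)
  moreover have "\<bar>(if x \<in> Y then 0 else 1) - (if y \<in> Y then 0 else 1)\<bar> \<le> (1::real)"
    by simp
  ultimately show ?thesis
    unfolding marked_infdist_def by linarith
qed

lemma borel_measurable_marked_infdist:
  "Y \<in> sets borel \<Longrightarrow> marked_infdist x\<^sub>0 Y \<in> borel_measurable borel"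
proof -
  have "(\<lambda>x. if Y = {} then dist x x\<^sub>0 else infdist x Y) \<in> borel_measurable borel"
    by (cases "Y = {}") (simp_all add: borel_measurable_continuous_onI continuous_intros)
  moreover assume "Y \<in> sets borel"
  then have "(\<lambda>x. if x \<in> Y then 0 else 1 :: real) \<in> borel_measurable borel"
    by measurable
  ultimately show ?thesis
    unfolding marked_infdist_def by (rule borel_measurable_add)
qed

definition partition_map :: "'a::metric_space \<Rightarrow> ('i::finite \<Rightarrow> 'a set) \<Rightarrow> 'a \<Rightarrow> real^'i" where
  "partition_map x\<^sub>0 A x = (\<chi> i. marked_infdist x\<^sub>0 (A i) x)"

lemma partition_map_component [simp]: "partition_map x\<^sub>0 A x $ i = marked_infdist x\<^sub>0 (A i) x"
  by (simp add: partition_map_def)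

lemma partition_map_in_Ccone:
  assumes "(\<Union>i. A i) = UNIV"
  shows "partition_map x\<^sub>0 A x \<in> Ccone"
proof -
  obtain i where "x \<in> A i"
    using assms by blast
  then show ?thesis
    by (auto simp: Ccone_def marked_infdist_nonneg marked_infdist_eq_0_iff)
qed

lemma vimage_partition_map_Astd:
  fixes A :: "'i::{finite,linorder} \<Rightarrow> 'a::metric_space set"
  assumes disjoint: "\<And>i j. i \<noteq> j \<Longrightarrow> A i \<inter> A j = {}" and cover: "(\<Union>i. A i) = UNIV"
  shows "partition_map x\<^sub>0 A -` Astd i = A i"
proof (intro set_eqI iffI)
  fix x
  assume "x \<in> partition_map x\<^sub>0 A -` Astd i"
  then show "x \<in> A i"
    by (simp add: Astd_def marked_infdist_eq_0_iff)
next
  fix x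
  assume "x \<in> A i"
  have "0 < marked_infdist x\<^sub>0 (A j) x" if "j < i" for j
  proof -
    have "x \<notin> A j"
      using disjoint[of i j] \<open>x \<in> A i\<close> that by auto
    then show ?thesis
      using one_le_marked_infdist[of x "A j" x\<^sub>0] by linarith
  qed
  then show "x \<in> partition_map x\<^sub>0 A -` Astd i"
    using \<open>x \<in> A i\<close> partition_map_in_Ccone[OF cover]
    by (simp add: Astd_def marked_infdist_eq_0_iff)
qed

lemma borel_measurable_partition_map:
  "(\<And>i. A i \<in> sets borel) \<Longrightarrow> partition_map x\<^sub>0 A \<in> borel_measurable borel"
  unfolding partition_map_def
  by (intro borel_measurable_vec_lambda borel_measurable_marked_infdist)

lemma dmax_partition_map_le: "dmax (partition_map x\<^sub>0 A x) (partition_map x\<^sub>0 A y) \<le> dist x y + 1"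
  by (simp add: dmax_le_iff abs_marked_infdist_diff_le)

lemma bounded_marked_infdist_sublevel:
  assumes transverse: "\<forall>R\<ge>0. bounded (\<Inter>i. nbhd (A i) R)"
  shows "bounded {x. \<forall>i. marked_infdist x\<^sub>0 (A i) x \<le> K}"
proof (cases "\<exists>i. A i = {}")
  case True
  then obtain i where "A i = {}"
    by blast
  have "x \<in> cball x\<^sub>0 K" if "\<forall>i. marked_infdist x\<^sub>0 (A i) x \<le> K" for x
    using dist_le_marked_infdist[OF \<open>A i = {}\<close>, of x x\<^sub>0] that[rule_format, of i]
    by (simp add: dist_commute)
  then have "{x. \<forall>i. marked_infdist x\<^sub>0 (A i) x \<le> K} \<subseteq> cball x\<^sub>0 K"
    by blast
  then show ?thesis
    using bounded_cball bounded_subset by blast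
next
  case False
  have "x \<in> nbhd (A i) \<bar>K\<bar>" if "\<forall>i. marked_infdist x\<^sub>0 (A i) x \<le> K" for x i
    using False infdist_le_marked_infdist[of "A i" x x\<^sub>0] that[rule_format, of i]
    by (auto simp: nbhd_def)
  then have "{x. \<forall>i. marked_infdist x\<^sub>0 (A i) x \<le> K} \<subseteq> (\<Inter>i. nbhd (A i) \<bar>K\<bar>)"
    by blast
  moreover have "bounded (\<Inter>i. nbhd (A i) \<bar>K\<bar>)"
    using transverse by simp
  ultimately show ?thesis
    using bounded_subset by blast
qed

lemma bounded_vimage_partition_map:
  assumes transverse: "\<forall>R\<ge>0. bounded (\<Inter>i. nbhd (A i) R)"
    and B_bounded: "\<exists>c R. \<forall>y\<in>B. dmax c y \<le> R"
  shows "bounded (partition_map x\<^sub>0 A -` B)"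
proof -
  obtain c R where c_R: "\<forall>y\<in>B. dmax c y \<le> R"
    using B_bounded by blast
  have "marked_infdist x\<^sub>0 (A i) x \<le> norm c + R"
    if "partition_map x\<^sub>0 A x \<in> B" for x i
  proof -
    have "dmax c (partition_map x\<^sub>0 A x) \<le> R"
      using c_R that by blast
    then have "\<bar>c $ i - marked_infdist x\<^sub>0 (A i) x\<bar> \<le> R"
      by (simp add: dmax_le_iff)
    then have "marked_infdist x\<^sub>0 (A i) x \<le> c $ i + R"
      by linarith
    then show ?thesis
      using component_le_norm_cart[of c i] by linarith
  qed
  then have "partition_map x\<^sub>0 A -` B
      \<subseteq> {x. \<forall>i. marked_infdist x\<^sub>0 (A i) x \<le> norm c + R}"
    by blast
  then show ?thesis
    using bounded_marked_infdist_sublevel[OF transverse] bounded_subset by blast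
qed

theorem lemma5p10:
  fixes A :: "'i::{finite,linorder} \<Rightarrow> 'a::metric_space set"
  assumes "proper_metric_space TYPE('a)"
    and "coarsely_transverse_partition A"
  shows "\<exists>f :: 'a \<Rightarrow> real^'i::{finite,linorder}. coarse_map_to_C f \<and> (\<forall>i. f -` Astd i = A i)"
proof -
  have borel: "\<And>i. A i \<in> sets borel"
    and disjoint: "\<And>i j. i \<noteq> j \<Longrightarrow> A i \<inter> A j = {}"
    and cover: "(\<Union>i. A i) = UNIV"
    and transverse: "\<forall>R\<ge>0. bounded (\<Inter>i. nbhd (A i) R)"
    using assms(2) unfolding coarsely_transverse_partition_def by auto
  fix x\<^sub>0 :: 'a
  have controlled: "\<exists>R>0. \<forall>x y. dist x y \<le> r \<longrightarrow>
      dmax (partition_map x\<^sub>0 A x) (partition_map x\<^sub>0 A y) \<le> R" if "r > 0" for r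
  proof (intro exI[of _ "r + 1"] conjI allI impI)
    fix x y :: 'a
    assume "dist x y \<le> r"
    then show "dmax (partition_map x\<^sub>0 A x) (partition_map x\<^sub>0 A y) \<le> r + 1"
      using dmax_partition_map_le[of x\<^sub>0 A x y] by linarith
  qed (use that in simp)
  have "coarse_map_to_C (partition_map x\<^sub>0 A)"
    unfolding coarse_map_to_C_def
    using partition_map_in_Ccone[OF cover] borel_measurable_partition_map[OF borel] controlled
      bounded_vimage_partition_map[OF transverse]
    by (intro conjI allI impI) auto
  then show ?thesis
    using vimage_partition_map_Astd[OF disjoint cover] by blast
qed

end
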